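(* Let $b>0$ and $N_{\rm r}\ge 1$, and let $x_1,\dots,x_{N_{\rm r}}\in\mathbb{C}$ be inputs satisfying $|\Re(x_k)|\le b$ and $|\Im(x_k)|\le b$ for all $k$. Define the first-order 1-bit spatial sigma-delta recursion with zero feedback phase shift (steering angle $\psi=0$) by $e_0=0$ and, for $n=1,\dots,N_{\rm r}$, $$r_n = x_n - e_{n-1},\qquad y_n=\mathcal{Q}_b[r_n],\qquad e_n = y_n - r_n,$$ where $\mathcal{Q}_b[u]=b\,\mathrm{sign}(\Re(u))+\jmath\, b\,\mathrm{sign}(\Im(u))$. Then for every $n=1,\dots,N_{\rm r}$, $$\Re(e_n) = b - 2b\left\langle \tfrac{1}{2}(n-1) + \tfrac{1}{2b}\sum_{k=1}^{n}\Re(x_k)\right\rangle,\qquad \Im(e_n) = b - 2b\left\langle \tfrac{1}{2}(n-1) + \tfrac{1}{2b}\sum_{k=1}^{n}\Im(x_k)\right\rangle,$$ where $\langle u\rangle = u-\lfloor u\rfloor$ denotes the fractional part of a real number $u$.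
   Context: $\jmath=\sqrt{-1}$. The function $\mathrm{sign}:\mathbb{R}\to\{-1,1\}$ is taken with the convention $\mathrm{sign}(u)=1$ for $u\ge 0$ and $\mathrm{sign}(u)=-1$ for $u<0$. In the paper the inputs $x_n$ are the antenna signals after an amplitude clipper with clipping level $c$; for steering angle $\psi=0$ the paper's overload condition $c=b(2-|\cos\varphi|-|\sin\varphi|)$ with $\varphi=0$ gives $c=b$, so the (clipped) inputs have real and imaginary parts bounded in absolute value by $b$. The quantity $e_n$ is the quantization error of channel (antenna) $n$, fed back to the input of channel $n+1$. *)

theory Defs
  imports Complex_Main
begin

definition sign1 :: "real \<Rightarrow> real" where
  "sign1 u = (if u \<ge> 0 then 1 else -1)"

definition quant :: "real \<Rightarrow> complex \<Rightarrow> complex" where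
  "quant b u = Complex (b * sign1 (Re u)) (b * sign1 (Im u))"

fun sd_err :: "real \<Rightarrow> (nat \<Rightarrow> complex) \<Rightarrow> nat \<Rightarrow> complex" where
  "sd_err b x 0 = 0"
| "sd_err b x (Suc n) =
     (let r = x (Suc n) - sd_err b x n; y = quant b r in y - r)"

end

theory Submission
  imports Defs
begin

text \<open>The recursion acts on real and imaginary parts separately, each being a scalar 1-bit
  sigma-delta loop. Writing the scalar error as \<open>e = b - 2b\<langle>S\<rangle>\<close>, the next residual is
  \<open>r = 2b(\<langle>S\<rangle> + t - 1)\<close> with \<open>t = 1/2 + a/(2b) \<in> [0,1]\<close>; so the sign of \<open>r\<close> records whether
  \<open>\<langle>S\<rangle> + t\<close> wraps past 1, and the new error is again \<open>b - 2b\<langle>S + t\<rangle>\<close>. Starting from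
  \<open>e\<^sub>0 = 0 = b - 2b\<langle>-1/2\<rangle>\<close>, the phase \<open>S\<close> accumulates to the stated sum.\<close>

fun scalar_sd_err :: "real \<Rightarrow> (nat \<Rightarrow> real) \<Rightarrow> nat \<Rightarrow> real" where
  "scalar_sd_err b a 0 = 0"
| "scalar_sd_err b a (Suc n) =
     (let r = a (Suc n) - scalar_sd_err b a n in b * sign1 r - r)"

lemma Re_sd_err: "Re (sd_err b x n) = scalar_sd_err b (\<lambda>k. Re (x k)) n"
  by (induction n) (simp_all add: quant_def Let_def)

lemma Im_sd_err: "Im (sd_err b x n) = scalar_sd_err b (\<lambda>k. Im (x k)) n"
  by (induction n) (simp_all add: quant_def Let_def)

lemma frac_add_unit_interval:
  fixes s t :: "'a::floor_ceiling"
  assumes "0 \<le> t" "t \<le> 1"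
  shows "frac (s + t) = (if frac s + t < 1 then frac s + t else frac s + t - 1)"
proof -
  have s: "s = of_int \<lfloor>s\<rfloor> + frac s" by (simp add: frac_def)
  have "0 \<le> frac s" "frac s < 1" by (simp_all add: frac_lt_1)
  then have "\<lfloor>s + t\<rfloor> = \<lfloor>s\<rfloor> + (if frac s + t < 1 then 0 else 1)"
    unfolding floor_eq_iff using assms s by (auto; linarith)
  then show ?thesis by (simp add: frac_def)
qed

lemma quantizer_error_step:
  fixes a b S :: real
  assumes "b > 0" and "\<bar>a\<bar> \<le> b"
  defines "r \<equiv> a - (b - 2 * b * frac S)"
  shows "b * sign1 r - r = b - 2 * b * frac (S + (1/2 + a / (2 * b)))"
proof -
  define t where "t = 1/2 + a / (2 * b)"
  have t: "0 \<le> t" "t \<le> 1"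
    using assms(1,2) by (auto simp: t_def field_simps abs_le_iff)
  have r: "r = 2 * b * (frac S + t - 1)"
    using assms(1) by (simp add: r_def t_def field_simps)
  have "sign1 r = (if frac S + t < 1 then -1 else 1)"
    using assms(1) by (auto simp: r sign1_def zero_le_mult_iff mult_less_0_iff)
  then show ?thesis
    unfolding t_def[symmetric] frac_add_unit_interval[OF t] r by (simp add: algebra_simps)
qed

lemma scalar_sd_err_closed_form:
  fixes b :: real and a :: "nat \<Rightarrow> real"
  assumes "b > 0" and "\<forall>k\<in>{1..n}. \<bar>a k\<bar> \<le> b"
  shows "scalar_sd_err b a n
           = b - 2 * b * frac ((real n - 1) / 2 + (1 / (2 * b)) * (\<Sum>k=1..n. a k))"
  using assms(2)
proof (induction n)
  case 0
  have "frac (-1/2 :: real) = 1/2"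
    by (simp add: frac_def floor_eq_iff)
  then show ?case by simp
next
  case (Suc n)
  define S where "S = (real n - 1) / 2 + (1 / (2 * b)) * (\<Sum>k=1..n. a k)"
  have IH: "scalar_sd_err b a n = b - 2 * b * frac S"
    using Suc by (simp add: S_def)
  have "(real (Suc n) - 1) / 2 + (1 / (2 * b)) * (\<Sum>k=1..Suc n. a k)
          = S + (1/2 + a (Suc n) / (2 * b))"
    using assms(1) by (simp add: S_def field_simps)
  moreover have "\<bar>a (Suc n)\<bar> \<le> b" using Suc.prems by simp
  ultimately show ?case
    using quantizer_error_step[OF assms(1)] by (simp add: IH Let_def)
qed

theorem lemma1:
  fixes b :: real and Nr :: nat and x :: "nat \<Rightarrow> complex"
  assumes "b > 0" and "Nr \<ge> 1"
    and "\<forall>k\<in>{1..Nr}. \<bar>Re (x k)\<bar> \<le> b \<and> \<bar>Im (x k)\<bar> \<le> b"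
  shows "\<forall>n\<in>{1..Nr}.
     Re (sd_err b x n) = b - 2 * b * frac ((real n - 1) / 2 + (1 / (2 * b)) * (\<Sum>k=1..n. Re (x k)))
   \<and> Im (sd_err b x n) = b - 2 * b * frac ((real n - 1) / 2 + (1 / (2 * b)) * (\<Sum>k=1..n. Im (x k)))"
proof
  fix n assume "n \<in> {1..Nr}"
  then have "\<forall>k\<in>{1..n}. \<bar>Re (x k)\<bar> \<le> b" "\<forall>k\<in>{1..n}. \<bar>Im (x k)\<bar> \<le> b"
    using assms(3) by auto
  from this[THEN scalar_sd_err_closed_form[OF assms(1)]]
  show "Re (sd_err b x n) = b - 2 * b * frac ((real n - 1) / 2 + (1 / (2 * b)) * (\<Sum>k=1..n. Re (x k)))
   \<and> Im (sd_err b x n) = b - 2 * b * frac ((real n - 1) / 2 + (1 / (2 * b)) * (\<Sum>k=1..n. Im (x k)))"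
    unfolding Re_sd_err Im_sd_err ..
qed

end
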